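(* Let $0<\alpha<d$, let $\mathrm{M}_\alpha\in\{\mathrm{M}^c_\alpha,\mathrm{M}^u_\alpha\}$, and let $f\in L^\infty(\mathbb{R}^d)$ have bounded variation. Then $\mathrm{M}_\alpha f$ is locally Lipschitz.
   Context: $f_B=\frac1{|B|}\int_B|f|$ and $r(B)$ is the radius of a ball $B$. $\mathrm{M}^c_\alpha f(x)=\sup_{r>0}r^\alpha f_{B(x,r)}$ (centered fractional maximal function), $\mathrm{M}^u_\alpha f(x)=\sup_{B\ni x}r(B)^\alpha f_B$ over all balls containing $x$ (uncentered). *)

theory Defs
  imports "HOL-Analysis.Analysis"
begin

definition avg_abs :: "('a::euclidean_space \<Rightarrow> real) \<Rightarrow> 'a set \<Rightarrow> real" where
  "avg_abs f B = (LINT y:B|lebesgue. \<bar>f y\<bar>) / measure lebesgue B"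

definition frac_max_centered :: "real \<Rightarrow> ('a::euclidean_space \<Rightarrow> real) \<Rightarrow> 'a \<Rightarrow> ereal" where
  "frac_max_centered \<alpha> f x = (SUP r\<in>{0<..}. ereal (r powr \<alpha> * avg_abs f (ball x r)))"

definition frac_max_uncentered :: "real \<Rightarrow> ('a::euclidean_space \<Rightarrow> real) \<Rightarrow> 'a \<Rightarrow> ereal" where
  "frac_max_uncentered \<alpha> f x =
     (SUP (c, r)\<in>{(c, r). 0 < r \<and> x \<in> ball c r}. ereal (r powr \<alpha> * avg_abs f (ball c r)))"

definition divergence :: "('a::euclidean_space \<Rightarrow> 'a) \<Rightarrow> 'a \<Rightarrow> real" where
  "divergence \<phi> x = (\<Sum>i\<in>Basis. frechet_derivative \<phi> (at x) i \<bullet> i)"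

definition test_field :: "('a::euclidean_space \<Rightarrow> 'a) \<Rightarrow> bool" where
  "test_field \<phi> \<longleftrightarrow>
     (\<forall>x. \<phi> differentiable (at x)) \<and>
     (\<forall>i\<in>Basis. continuous_on UNIV (\<lambda>x. frechet_derivative \<phi> (at x) i)) \<and>
     compact (closure {x. \<phi> x \<noteq> 0}) \<and>
     (\<forall>x. norm (\<phi> x) \<le> 1)"

definition finite_variation :: "('a::euclidean_space \<Rightarrow> real) \<Rightarrow> bool" where
  "finite_variation f \<longleftrightarrow>
     (\<exists>C. \<forall>\<phi>. test_field \<phi> \<longrightarrow> (LINT x|lebesgue. f x * divergence \<phi> x) \<le> C)"

definition bounded_variation :: "('a::euclidean_space \<Rightarrow> real) \<Rightarrow> bool" where
  "bounded_variation f \<longleftrightarrow> integrable lebesgue f \<and> finite_variation f"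

definition essentially_bounded :: "('a::euclidean_space \<Rightarrow> real) \<Rightarrow> bool" where
  "essentially_bounded f \<longleftrightarrow> f \<in> borel_measurable lebesgue \<and> (\<exists>C. AE x in lebesgue. \<bar>f x\<bar> \<le> C)"

definition locally_lipschitz :: "('a::metric_space \<Rightarrow> real) \<Rightarrow> bool" where
  "locally_lipschitz g \<longleftrightarrow> (\<forall>x. \<exists>e>0. \<exists>L. L-lipschitz_on (ball x e) g)"

end

theory Submission
  imports Defs
begin

(* For a ball B(c,r) put V(c,r) = r^\<alpha> f_B(c,r). Boundedness of f gives V(c,r) \<le> C r^\<alpha>, so V is
   small on small balls, and integrability of f together with \<alpha> \<le> d bounds V on large balls.
   A ball of radius r admissible at x, enlarged by h = |x - y|, is admissible at y (centered or
   not), and V loses at most the factor (r/(r+h))^d. If M f(x0) > 0, then near x0 only balls of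
   radius at least some \<delta> > 0 matter, and for them 1 - (r/(r+h))^d \<le> d h/\<delta>; this gives a local
   Lipschitz bound. If M f vanishes at one point it vanishes everywhere. *)

locale ball_functional =
  fixes V :: "'a::metric_space \<times> real \<Rightarrow> real" and N :: nat and B :: real
  assumes nonneg: "0 < r \<Longrightarrow> 0 \<le> V (c, r)"
    and bounded: "0 < r \<Longrightarrow> V (c, r) \<le> B"
    and small_radii: "\<epsilon> > 0 \<Longrightarrow> \<exists>\<delta>>0. \<forall>c r. 0 < r \<longrightarrow> r < \<delta> \<longrightarrow> V (c, r) < \<epsilon>"
    and enlarge:
      "0 < r \<Longrightarrow> r \<le> R \<Longrightarrow> ball c r \<subseteq> ball c' R \<Longrightarrow> (r / R) ^ N * V (c, r) \<le> V (c', R)"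

locale ball_maximal = ball_functional V N B
  for V :: "'a::metric_space \<times> real \<Rightarrow> real" and N B +
  fixes I :: "'a \<Rightarrow> ('a \<times> real) set"
  assumes family_nonempty: "I x \<noteq> {}"
    and radius_pos: "(c, r) \<in> I x \<Longrightarrow> 0 < r"
    and family_enlarge:
      "(c, r) \<in> I x \<Longrightarrow> \<exists>c'. (c', r + dist x y) \<in> I y \<and> ball c r \<subseteq> ball c' (r + dist x y)"
begin

definition maximal :: "'a \<Rightarrow> real" where
  "maximal x = (SUP i\<in>I x. V i)"

lemma enlarge_into_family:
  assumes "(c, r) \<in> I x"
  obtains j where "j \<in> I y" "(r / (r + dist x y)) ^ N * V (c, r) \<le> V j"
proof -
  obtain c' where "(c', r + dist x y) \<in> I y" "ball c r \<subseteq> ball c' (r + dist x y)"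
    using family_enlarge[OF assms] by blast
  then show ?thesis
    using that enlarge radius_pos[OF assms] by (metis le_add_same_cancel1 zero_le_dist)
qed

lemma V_le_maximal:
  assumes "i \<in> I x"
  shows "V i \<le> maximal x"
  unfolding maximal_def
proof (rule cSUP_upper[OF assms])
  have "V i \<le> B" if "i \<in> I x" for i
    using that bounded[OF radius_pos] by (cases i) simp
  then show "bdd_above (V ` I x)"
    by (intro bdd_aboveI[of _ B]) blast
qed

lemma maximal_le:
  assumes "\<And>c r. (c, r) \<in> I x \<Longrightarrow> V (c, r) \<le> a"
  shows "maximal x \<le> a"
  unfolding maximal_def
proof (rule cSUP_least[OF family_nonempty])
  fix i assume "i \<in> I x"
  then show "V i \<le> a"
    using assms by (cases i) simp
qed

lemma maximal_nonneg: "0 \<le> maximal x"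
proof -
  obtain c r where "(c, r) \<in> I x"
    using family_nonempty by fast
  then show ?thesis
    using nonneg[OF radius_pos] V_le_maximal by (meson order_trans)
qed

lemma B_nonneg: "0 \<le> B"
  using nonneg[OF zero_less_one] bounded[OF zero_less_one] by (rule order_trans)

lemma ereal_maximal: "(SUP i\<in>I x. ereal (V i)) = ereal (maximal x)"
proof -
  have "\<bar>SUP i\<in>I x. ereal (V i)\<bar> \<noteq> \<infinity>"
    using family_nonempty nonneg[OF radius_pos] bounded[OF radius_pos]
    by (intro ereal_SUP_not_infty[where l = 0 and u = "ereal B"]) auto
  then show ?thesis
    unfolding maximal_def by (rule ereal_SUP[symmetric])
qed

lemma maximal_pos_witness:
  assumes "0 < maximal x"
  shows "\<exists>c r. (c, r) \<in> I x \<and> 0 < V (c, r)"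
proof (rule ccontr)
  assume none: "\<nexists>c r. (c, r) \<in> I x \<and> 0 < V (c, r)"
  have "maximal x \<le> 0"
  proof (rule maximal_le)
    show "V (c, r) \<le> 0" if "(c, r) \<in> I x" for c r
      using none that by (simp add: not_less)
  qed
  then show False
    using assms by simp
qed

lemma maximal_pos_everywhere:
  assumes "0 < maximal x"
  shows "0 < maximal y"
proof -
  obtain c r where cr: "(c, r) \<in> I x" "0 < V (c, r)"
    using maximal_pos_witness[OF assms] by blast
  obtain j where "j \<in> I y" "(r / (r + dist x y)) ^ N * V (c, r) \<le> V j"
    by (rule enlarge_into_family[OF cr(1)])
  moreover have "0 < (r / (r + dist x y)) ^ N * V (c, r)"
    using radius_pos[OF cr(1)] cr(2) by (simp add: add_pos_nonneg)
  ultimately show ?thesis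
    using V_le_maximal by (metis order_less_le_trans)
qed

lemma maximal_lower_bound_near:
  assumes "(c, r) \<in> I x0" and "y \<in> ball x0 r"
  shows "(1/2) ^ N * V (c, r) \<le> maximal y"
proof -
  obtain j where j: "j \<in> I y" "(r / (r + dist x0 y)) ^ N * V (c, r) \<le> V j"
    by (rule enlarge_into_family[OF assms(1)])
  have half: "1/2 \<le> r / (r + h)" if "0 \<le> h" "h < r" for h :: real
    using that by (simp add: divide_simps)
  have "1/2 \<le> r / (r + dist x0 y)"
    by (rule half) (use assms(2) in auto)
  then have "(1/2) ^ N * V (c, r) \<le> (r / (r + dist x0 y)) ^ N * V (c, r)"
    using nonneg[OF radius_pos[OF assms(1)]] by (intro mult_right_mono power_mono) auto
  also have "\<dots> \<le> maximal y"
    using j V_le_maximal order_trans by blast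
  finally show ?thesis .
qed

(* Balls on which V is at least m have radius at least \<delta>, and such a ball loses at most the
   factor 1 - (r/(r+h))^N \<le> N h/\<delta> when it is enlarged by h. *)
lemma maximal_diff_le:
  assumes "0 < \<delta>" and small: "\<forall>c r. 0 < r \<longrightarrow> r < \<delta> \<longrightarrow> V (c, r) < m"
    and "m \<le> maximal y"
  shows "maximal x \<le> maximal y + real N * B / \<delta> * dist x y"
proof (rule maximal_le)
  fix c r assume cr: "(c, r) \<in> I x"
  have slope: "0 \<le> real N * B / \<delta> * dist x y"
    using B_nonneg \<open>0 < \<delta>\<close> by simp
  show "V (c, r) \<le> maximal y + real N * B / \<delta> * dist x y"
  proof (cases "r < \<delta>")
    case True
    then have "V (c, r) < m"
      using small radius_pos[OF cr] by blast
    then show ?thesis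
      using \<open>m \<le> maximal y\<close> slope by linarith
  next
    case False
    define h where "h = dist x y"
    define t where "t = r / (r + h)"
    have r: "0 < r" using radius_pos[OF cr] .
    obtain j where j: "j \<in> I y" "t ^ N * V (c, r) \<le> V j"
      unfolding t_def h_def by (rule enlarge_into_family[OF cr])
    have h: "0 \<le> h"
      unfolding h_def by simp
    have t: "0 \<le> t" "t \<le> 1"
      unfolding t_def using r h by auto
    have "1 - t = h / (r + h)"
      unfolding t_def using r h by (simp add: field_simps)
    also have "\<dots> \<le> h / \<delta>"
      using False \<open>0 < \<delta>\<close> h by (intro divide_left_mono) auto
    finally have one_minus_t: "1 - t \<le> h / \<delta>" .
    have Bernoulli: "1 - t ^ N \<le> real N * (1 - t)"
      using Bernoulli_inequality[of "t - 1" N] t by (simp add: algebra_simps)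
    have "V (c, r) - maximal y \<le> (1 - t ^ N) * V (c, r)"
      using j V_le_maximal[OF j(1)] by (simp add: algebra_simps)
    also have "\<dots> \<le> real N * (1 - t) * V (c, r)"
      using Bernoulli nonneg[OF r] by (rule mult_right_mono)
    also have "\<dots> \<le> real N * (1 - t) * B"
      using bounded[OF r] t by (intro mult_left_mono) auto
    also have "\<dots> \<le> real N * (h / \<delta>) * B"
      using one_minus_t B_nonneg by (intro mult_right_mono mult_left_mono) auto
    also have "\<dots> = real N * B / \<delta> * dist x y"
      unfolding h_def by simp
    finally show ?thesis
      by simp
  qed
qed

lemma locally_lipschitz_maximal: "locally_lipschitz maximal"
  unfolding locally_lipschitz_def
proof
  fix x0
  show "\<exists>e>0. \<exists>L. L-lipschitz_on (ball x0 e) maximal"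
  proof (cases "maximal x0 = 0")
    case True
    then have "maximal y = 0" for y
      using maximal_pos_everywhere[of y x0] maximal_nonneg[of y] by linarith
    then have "0-lipschitz_on (ball x0 1) maximal"
      by (intro lipschitz_onI) auto
    then show ?thesis
      using zero_less_one by blast
  next
    case False
    then have "0 < maximal x0"
      using maximal_nonneg[of x0] by linarith
    then obtain c r where cr: "(c, r) \<in> I x0" "0 < V (c, r)"
      using maximal_pos_witness by blast
    define m where "m = (1/2) ^ N * V (c, r)"
    obtain \<delta> where \<delta>: "0 < \<delta>" "\<forall>c r. 0 < r \<longrightarrow> r < \<delta> \<longrightarrow> V (c, r) < m"
      using small_radii[of m] cr(2) by (auto simp: m_def)
    have diff: "maximal x \<le> maximal y + real N * B / \<delta> * dist x y" if "y \<in> ball x0 r" for x y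
      using \<delta> maximal_lower_bound_near[OF cr(1) that] unfolding m_def by (rule maximal_diff_le)
    have "(real N * B / \<delta>)-lipschitz_on (ball x0 r) maximal"
    proof (rule lipschitz_onI)
      fix x y assume "x \<in> ball x0 r" "y \<in> ball x0 r"
      then show "dist (maximal x) (maximal y) \<le> real N * B / \<delta> * dist x y"
        using diff[of y x] diff[of x y] by (simp add: dist_real_def dist_commute abs_le_iff)
    qed (use B_nonneg \<delta>(1) in simp)
    then show ?thesis
      using radius_pos[OF cr(1)] by blast
  qed
qed

end

lemma set_integral_abs_mono_set:
  fixes f :: "'a \<Rightarrow> real"
  assumes f: "integrable M f" and "A \<in> sets M" "B \<in> sets M" "A \<subseteq> B"
  shows "(LINT x:A|M. \<bar>f x\<bar>) \<le> (LINT x:B|M. \<bar>f x\<bar>)"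
  unfolding set_lebesgue_integral_def
proof (rule integral_mono)
  show "integrable M (\<lambda>x. indicat_real A x *\<^sub>R \<bar>f x\<bar>)"
    using integrable_mult_indicator[OF \<open>A \<in> sets M\<close> integrable_abs[OF f]] by simp
  show "integrable M (\<lambda>x. indicat_real B x *\<^sub>R \<bar>f x\<bar>)"
    using integrable_mult_indicator[OF \<open>B \<in> sets M\<close> integrable_abs[OF f]] by simp
  show "indicat_real A x *\<^sub>R \<bar>f x\<bar> \<le> indicat_real B x *\<^sub>R \<bar>f x\<bar>" for x
    using \<open>A \<subseteq> B\<close> by (auto simp: indicator_def)
qed

lemma set_integral_abs_le_measure:
  fixes f :: "'a \<Rightarrow> real"
  assumes f: "integrable M f" and bound: "AE x in M. \<bar>f x\<bar> \<le> C"
    and A: "A \<in> sets M" "emeasure M A < \<infinity>"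
  shows "(LINT x:A|M. \<bar>f x\<bar>) \<le> C * measure M A"
proof -
  have "(LINT x:A|M. \<bar>f x\<bar>) \<le> (LINT x|M. indicator A x * C)"
    unfolding set_lebesgue_integral_def
  proof (rule integral_mono_AE)
    show "integrable M (\<lambda>x. indicat_real A x *\<^sub>R \<bar>f x\<bar>)"
      using integrable_mult_indicator[OF A(1) integrable_abs[OF f]] by simp
    show "integrable M (\<lambda>x. indicat_real A x * C)"
      using A by (intro integrable_mult_left integrable_real_indicator)
    show "AE x in M. indicat_real A x *\<^sub>R \<bar>f x\<bar> \<le> indicat_real A x * C"
      using bound by eventually_elim (auto simp: indicator_def)
  qed
  also have "\<dots> = C * measure M A"
    using A by simp
  finally show ?thesis .
qed

lemma set_integral_abs_nonneg:
  fixes f :: "'a \<Rightarrow> real"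
  shows "0 \<le> (LINT x:A|M. \<bar>f x\<bar>)"
  unfolding set_lebesgue_integral_def by (rule integral_nonneg_AE) (simp add: indicator_def)

lemma set_integral_abs_le_integral:
  fixes f :: "'a \<Rightarrow> real"
  assumes f: "integrable M f" and "A \<in> sets M"
  shows "(LINT x:A|M. \<bar>f x\<bar>) \<le> (LINT x|M. \<bar>f x\<bar>)"
proof -
  have "(LINT x:A|M. \<bar>f x\<bar>) \<le> (LINT x:space M|M. \<bar>f x\<bar>)"
    using assms sets.sets_into_space by (intro set_integral_abs_mono_set) auto
  also have "\<dots> = (LINT x|M. \<bar>f x\<bar>)"
    using f by (intro set_integral_space) simp
  finally show ?thesis .
qed

lemma avg_abs_nonneg: "0 \<le> avg_abs f B"
  unfolding avg_abs_def by (simp add: set_integral_abs_nonneg)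

definition frac_avg :: "real \<Rightarrow> ('a::euclidean_space \<Rightarrow> real) \<Rightarrow> 'a \<times> real \<Rightarrow> real" where
  "frac_avg \<alpha> f = (\<lambda>(c, r). r powr \<alpha> * avg_abs f (ball c r))"

lemma avg_abs_ball:
  fixes f :: "'a::euclidean_space \<Rightarrow> real"
  assumes "0 < r"
  shows "avg_abs f (ball c r)
    = (LINT y:ball c r|lebesgue. \<bar>f y\<bar>) / (unit_ball_vol DIM('a) * r ^ DIM('a))"
  unfolding avg_abs_def using content_ball[of r c] assms by simp

lemma frac_avg_nonneg: "0 \<le> frac_avg \<alpha> f i"
  by (cases i) (simp add: frac_avg_def avg_abs_nonneg)

context
  fixes f :: "'a::euclidean_space \<Rightarrow> real"
  assumes f: "integrable lebesgue f"
begin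

lemma avg_abs_ball_le_bound:
  assumes bound: "AE x in lebesgue. \<bar>f x\<bar> \<le> C" and "0 < r"
  shows "avg_abs f (ball c r) \<le> C"
proof -
  have "0 < measure lebesgue (ball c r)"
    using content_ball_pos[OF \<open>0 < r\<close>] by simp
  moreover have "(LINT y:ball c r|lebesgue. \<bar>f y\<bar>) \<le> C * measure lebesgue (ball c r)"
    using lmeasurable_ball[of c r]
    by (intro set_integral_abs_le_measure[OF f bound]) (auto simp: fmeasurable_def)
  ultimately show ?thesis
    unfolding avg_abs_def by (simp add: divide_le_eq)
qed

lemma frac_avg_le_small_radius:
  assumes "AE x in lebesgue. \<bar>f x\<bar> \<le> C" and "0 < r"
  shows "frac_avg \<alpha> f (c, r) \<le> C * r powr \<alpha>"
  using mult_left_mono[OF avg_abs_ball_le_bound[OF assms], of "r powr \<alpha>"]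
  by (simp add: frac_avg_def mult.commute)

lemma frac_avg_le_large_radius:
  fixes \<alpha> :: real
  assumes "\<alpha> \<le> DIM('a)" and "1 \<le> r"
  shows "frac_avg \<alpha> f (c, r) \<le> (LINT y|lebesgue. \<bar>f y\<bar>) / unit_ball_vol DIM('a)"
proof -
  have r: "0 < r" using assms(2) by simp
  have "r powr \<alpha> \<le> r ^ DIM('a)"
    using assms powr_mono[of \<alpha> "DIM('a)" r] by (simp add: powr_realpow)
  moreover have "(LINT y:ball c r|lebesgue. \<bar>f y\<bar>) \<le> (LINT y|lebesgue. \<bar>f y\<bar>)"
    using lmeasurable_ball[of c r]
    by (intro set_integral_abs_le_integral[OF f]) (auto simp: fmeasurable_def)
  ultimately have "r powr \<alpha> * (LINT y:ball c r|lebesgue. \<bar>f y\<bar>)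
      \<le> r ^ DIM('a) * (LINT y|lebesgue. \<bar>f y\<bar>)"
    using r by (intro mult_mono) (auto simp: set_integral_abs_nonneg)
  then show ?thesis
    using r by (simp add: frac_avg_def avg_abs_ball divide_simps mult.commute)
qed

lemma frac_avg_enlarge:
  assumes "0 \<le> \<alpha>" "0 < r" "r \<le> R" "ball c r \<subseteq> ball c' R"
  shows "(r / R) ^ DIM('a) * frac_avg \<alpha> f (c, r) \<le> frac_avg \<alpha> f (c', R)"
proof -
  have R: "0 < R" using assms by linarith
  have "(r / R) ^ DIM('a) * frac_avg \<alpha> f (c, r)
      = r powr \<alpha> * (LINT y:ball c r|lebesgue. \<bar>f y\<bar>) / (unit_ball_vol DIM('a) * R ^ DIM('a))"
    using assms(2) R by (simp add: frac_avg_def avg_abs_ball power_divide field_simps)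
  also have "\<dots> \<le> R powr \<alpha> * (LINT y:ball c' R|lebesgue. \<bar>f y\<bar>) / (unit_ball_vol DIM('a) * R ^ DIM('a))"
    using assms R lmeasurable_ball[of c r] lmeasurable_ball[of c' R]
    by (intro divide_right_mono mult_mono powr_mono2 set_integral_abs_mono_set[OF f])
       (auto simp: set_integral_abs_nonneg fmeasurable_def)
  also have "\<dots> = frac_avg \<alpha> f (c', R)"
    using R by (simp add: frac_avg_def avg_abs_ball)
  finally show ?thesis .
qed

lemma ball_functional_frac_avg:
  fixes \<alpha> :: real
  assumes "0 < \<alpha>" "\<alpha> \<le> DIM('a)" and bound: "AE x in lebesgue. \<bar>f x\<bar> \<le> C"
  shows "\<exists>B. ball_functional (frac_avg \<alpha> f) DIM('a) B"
proof -
  define K where "K = (LINT y|lebesgue. \<bar>f y\<bar>) / unit_ball_vol DIM('a)"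
  have "K \<ge> 0"
    unfolding K_def by simp
  have abs_bound: "AE x in lebesgue. \<bar>f x\<bar> \<le> \<bar>C\<bar>"
    using bound by eventually_elim auto
  have "ball_functional (frac_avg \<alpha> f) DIM('a) (\<bar>C\<bar> + K)"
  proof (rule ball_functional.intro)
    show "0 \<le> frac_avg \<alpha> f (c, r)" for c r
      by (rule frac_avg_nonneg)
    show "frac_avg \<alpha> f (c, r) \<le> \<bar>C\<bar> + K" if "0 < r" for c r
    proof (cases "r \<le> 1")
      case True
      have "\<bar>C\<bar> * r powr \<alpha> \<le> \<bar>C\<bar>"
        using True that assms(1) by (simp add: mult_left_le powr_le1)
      then show ?thesis
        using frac_avg_le_small_radius[OF abs_bound that, of \<alpha> c] \<open>K \<ge> 0\<close> by linarith
    next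
      case False
      then show ?thesis
        using frac_avg_le_large_radius[OF assms(2), of r c] unfolding K_def by simp
    qed
    show "\<exists>\<delta>>0. \<forall>c r. 0 < r \<longrightarrow> r < \<delta> \<longrightarrow> frac_avg \<alpha> f (c, r) < \<epsilon>" if "0 < \<epsilon>" for \<epsilon>
    proof (intro exI[of _ "(\<epsilon> / (\<bar>C\<bar> + 1)) powr (1 / \<alpha>)"] conjI allI impI)
      show "0 < (\<epsilon> / (\<bar>C\<bar> + 1)) powr (1 / \<alpha>)"
        using that by simp
      fix c r assume r: "0 < r" "r < (\<epsilon> / (\<bar>C\<bar> + 1)) powr (1 / \<alpha>)"
      have "r powr \<alpha> < ((\<epsilon> / (\<bar>C\<bar> + 1)) powr (1 / \<alpha>)) powr \<alpha>"
        using r assms(1) by (intro powr_less_mono2) auto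
      also have "\<dots> = \<epsilon> / (\<bar>C\<bar> + 1)"
        using assms(1) that by (simp add: powr_powr)
      finally have "(\<bar>C\<bar> + 1) * r powr \<alpha> < \<epsilon>"
        by (simp add: field_simps add_pos_nonneg)
      moreover have "\<bar>C\<bar> * r powr \<alpha> \<le> (\<bar>C\<bar> + 1) * r powr \<alpha>"
        by (simp add: mult_right_mono)
      ultimately show "frac_avg \<alpha> f (c, r) < \<epsilon>"
        using frac_avg_le_small_radius[OF abs_bound r(1), of \<alpha> c] by linarith
    qed
    show "(r / R) ^ DIM('a) * frac_avg \<alpha> f (c, r) \<le> frac_avg \<alpha> f (c', R)"
      if "0 < r" "r \<le> R" "ball c r \<subseteq> ball c' R" for r R c c'
      using frac_avg_enlarge assms(1) that by simp
  qed
  then show ?thesis ..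
qed

end

lemma ball_maximal_centered:
  assumes "ball_functional V N B"
  shows "ball_maximal V N B (\<lambda>x. (\<lambda>r. (x, r)) ` {0<..})"
proof (intro ball_maximal.intro ball_maximal_axioms.intro assms)
  show "(\<lambda>r. (x, r)) ` {0::real<..} \<noteq> {}" for x :: 'a
    by simp
  show "0 < r" if "(c, r) \<in> (\<lambda>r. (x, r)) ` {0<..}" for c x :: 'a and r
    using that by auto
  show "\<exists>c'. (c', r + dist x y) \<in> (\<lambda>r. (y, r)) ` {0<..} \<and> ball c r \<subseteq> ball c' (r + dist x y)"
    if "(c, r) \<in> (\<lambda>r. (x, r)) ` {0<..}" for c x y :: 'a and r
  proof (intro exI conjI)
    show "(y, r + dist x y) \<in> (\<lambda>r. (y, r)) ` {0<..}"
      using that by (intro image_eqI[of _ _ "r + dist x y"]) (auto intro: add_pos_nonneg)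
    show "ball c r \<subseteq> ball y (r + dist x y)"
    proof
      fix z assume "z \<in> ball c r"
      then have "dist x z < r"
        using that by auto
      then show "z \<in> ball y (r + dist x y)"
        using dist_triangle[of y z x] dist_commute[of y x] by simp
    qed
  qed
qed

lemma ball_maximal_uncentered:
  assumes "ball_functional V N B"
  shows "ball_maximal V N B (\<lambda>x. {(c, r). 0 < r \<and> x \<in> ball c r})"
proof (intro ball_maximal.intro ball_maximal_axioms.intro assms)
  show "{(c, r). 0 < r \<and> x \<in> ball c r} \<noteq> {}" for x :: 'a
    by (auto intro!: exI[of _ x] exI[of _ 1])
  show "0 < r" if "(c, r) \<in> {(c, r). 0 < r \<and> x \<in> ball c r}" for c x :: 'a and r
    using that by auto
  show "\<exists>c'. (c', r + dist x y) \<in> {(c, r). 0 < r \<and> y \<in> ball c r} \<and> ball c r \<subseteq> ball c' (r + dist x y)"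
    if "(c, r) \<in> {(c, r). 0 < r \<and> x \<in> ball c r}" for c x y :: 'a and r
  proof (intro exI conjI)
    show "(c, r + dist x y) \<in> {(c, r). 0 < r \<and> y \<in> ball c r}"
      using that dist_triangle[of c y x] by (auto intro: add_pos_nonneg)
    show "ball c r \<subseteq> ball c (r + dist x y)"
      by (simp add: subset_ball)
  qed
qed

theorem lemma2p3:
  fixes f :: "'a::euclidean_space \<Rightarrow> real" and \<alpha> :: real
  assumes "0 < \<alpha>" and "\<alpha> < real DIM('a)"
    and "essentially_bounded f"
    and "bounded_variation f"
  shows "((\<forall>x. \<bar>frac_max_centered \<alpha> f x\<bar> \<noteq> \<infinity>) \<and>
           locally_lipschitz (\<lambda>x. real_of_ereal (frac_max_centered \<alpha> f x))) \<and>
         ((\<forall>x. \<bar>frac_max_uncentered \<alpha> f x\<bar> \<noteq> \<infinity>) \<and>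
           locally_lipschitz (\<lambda>x. real_of_ereal (frac_max_uncentered \<alpha> f x)))"
proof -
  obtain C where bound: "AE x in lebesgue. \<bar>f x\<bar> \<le> C"
    using assms(3) unfolding essentially_bounded_def by blast
  have f: "integrable lebesgue f"
    using assms(4) unfolding bounded_variation_def by blast
  obtain B where V: "ball_functional (frac_avg \<alpha> f) DIM('a) B"
    using ball_functional_frac_avg[OF f assms(1) less_imp_le[OF assms(2)] bound] by blast
  interpret centered: ball_maximal "frac_avg \<alpha> f" "DIM('a)" B "\<lambda>x. (\<lambda>r. (x, r)) ` {0<..}"
    by (rule ball_maximal_centered[OF V])
  interpret uncentered: ball_maximal "frac_avg \<alpha> f" "DIM('a)" B "\<lambda>x. {(c, r). 0 < r \<and> x \<in> ball c r}"
    by (rule ball_maximal_uncentered[OF V])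
  have "frac_max_centered \<alpha> f x = ereal (centered.maximal x)" for x
    unfolding frac_max_centered_def centered.ereal_maximal[symmetric]
    by (simp add: frac_avg_def image_comp)
  moreover have "frac_max_uncentered \<alpha> f x = ereal (uncentered.maximal x)" for x
    unfolding frac_max_uncentered_def uncentered.ereal_maximal[symmetric]
    by (simp add: frac_avg_def case_prod_unfold)
  ultimately show ?thesis
    using centered.locally_lipschitz_maximal uncentered.locally_lipschitz_maximal by simp
qed

end
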